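(* Let $G$ and $K$ be countable sets, let $m\in\mathbb N^+$, let $T\in\Lambda^G_m$ be an $m$-parent transmission function over $G$, and let $\beta:G\rightarrow K$ be a surjective function such that $T$ is ambivalent under $\beta$, with theme transmission function $T^{\overrightarrow\beta}\in\Lambda^K_m$. Then for every $p\in\Lambda^G$, \[\Xi_\beta(\mathcal V_T p)=\mathcal V_{T^{\overrightarrow\beta}}(\Xi_\beta p),\] i.e. $\mathcal V_T$ is globally coarsenable under $\beta$ with quotient $\mathcal V_{T^{\overrightarrow\beta}}$.
   Context: For a set $X$, $\Lambda^X$ denotes the set of distributions over $X$, i.e. functions $p:X\rightarrow[0,1]$ with $\sum_{x\in X}p(x)=1$. For $m\in\mathbb N^+$, an $m$-parent transmission function over $X$ is a function $T:\prod_1^{m+1}X\rightarrow[0,1]$, written $T(x|x_1,\ldots,x_m)$, such that for all $x_1,\ldots,x_m\in X$, $\sum_{x\in X}T(x|x_1,\ldots,x_m)=1$; the set of these is $\Lambda^X_m$. For $T\in\Lambda^X_m$ ($X$ countable), the variation operator $\mathcal V_T:\Lambda^X\rightarrow\Lambda^X$ is $(\mathcal V_Tp)(x)=\sum_{(x_1,\ldots,x_m)\in\prod_1^m X}T(x|x_1,\ldots,x_m)\prod_{i=1}^m p(x_i)$. For a function $\beta:X\rightarrow Y$ and $y\in Y$, $\langle y\rangle_\beta=\{x\in X\mid\beta(x)=y\}$. The projection operator $\Xi_\beta:\Lambda^X\rightarrow\Lambda^Y$ is $(\Xi_\beta p)(y)=\sum_{x\in\langle y\rangle_\beta}p(x)$.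 A transmission function $T\in\Lambda^G_m$ is ambivalent under a surjection $\beta:G\rightarrow K$ if there exists $D\in\Lambda^K_m$ such that for all $k,k_1,\ldots,k_m\in K$ and all $x_1\in\langle k_1\rangle_\beta,\ldots,x_m\in\langle k_m\rangle_\beta$, $\sum_{x\in\langle k\rangle_\beta}T(x|x_1,\ldots,x_m)=D(k|k_1,\ldots,k_m)$; this (unique) $D$ is denoted $T^{\overrightarrow\beta}$. *)

theory Defs
  imports "HOL-Analysis.Analysis"
begin

definition distribution :: "('a \<Rightarrow> real) \<Rightarrow> bool" where
  "distribution p \<longleftrightarrow> (\<forall>x. 0 \<le> p x \<and> p x \<le> 1) \<and> (p has_sum 1) UNIV"

text \<open>m-parent transmission functions; T x xs stands for T(x | x_1,...,x_m),
  where the parent tuple is the list xs of length m.\<close>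
definition transmission_fun :: "nat \<Rightarrow> ('a \<Rightarrow> 'a list \<Rightarrow> real) \<Rightarrow> bool" where
  "transmission_fun m T \<longleftrightarrow> (\<forall>xs. length xs = m \<longrightarrow> distribution (\<lambda>x. T x xs))"

definition variation :: "nat \<Rightarrow> ('a \<Rightarrow> 'a list \<Rightarrow> real) \<Rightarrow> ('a \<Rightarrow> real) \<Rightarrow> 'a \<Rightarrow> real" where
  "variation m T p x = (\<Sum>\<^sub>\<infinity>xs\<in>{xs. length xs = m}. T x xs * prod_list (map p xs))"

definition projection :: "('a \<Rightarrow> 'b) \<Rightarrow> ('a \<Rightarrow> real) \<Rightarrow> 'b \<Rightarrow> real" where
  "projection \<beta> p y = (\<Sum>\<^sub>\<infinity>x\<in>{x. \<beta> x = y}. p x)"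

definition ambivalence_witness ::
  "nat \<Rightarrow> ('a \<Rightarrow> 'a list \<Rightarrow> real) \<Rightarrow> ('a \<Rightarrow> 'b) \<Rightarrow> ('b \<Rightarrow> 'b list \<Rightarrow> real) \<Rightarrow> bool" where
  "ambivalence_witness m T \<beta> D \<longleftrightarrow> transmission_fun m D \<and>
     (\<forall>k ks xs. length ks = m \<and> length xs = m \<and> map \<beta> xs = ks \<longrightarrow>
        (\<Sum>\<^sub>\<infinity>x\<in>{x. \<beta> x = k}. T x xs) = D k ks)"

definition ambivalent :: "nat \<Rightarrow> ('a \<Rightarrow> 'a list \<Rightarrow> real) \<Rightarrow> ('a \<Rightarrow> 'b) \<Rightarrow> bool" where
  "ambivalent m T \<beta> \<longleftrightarrow> (\<exists>D. ambivalence_witness m T \<beta> D)"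

text \<open>The theme transmission function T^{->beta} (unique on length-m parent lists).\<close>
definition theme_tf ::
  "nat \<Rightarrow> ('a \<Rightarrow> 'a list \<Rightarrow> real) \<Rightarrow> ('a \<Rightarrow> 'b) \<Rightarrow> ('b \<Rightarrow> 'b list \<Rightarrow> real)" where
  "theme_tf m T \<beta> = (SOME D. ambivalence_witness m T \<beta> D)"

end

theory Submission imports Defs begin

text \<open>Fix a theme \<open>k\<close> and write \<open>D\<close> for the theme transmission function. Both sides at \<open>k\<close>
  equal the sum, over all parent tuples \<open>xs\<close> of length \<open>m\<close>, of \<open>D(k | \<beta> xs) \<cdot> p(xs\<^sub>1)\<cdots>p(xs\<^sub>m)\<close>.
  On the left, the sum over the fibre of \<open>k\<close> and the sum over parent tuples may be exchanged
  because all terms are nonnegative, and ambivalence evaluates the inner sum. On the right, group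
  the parent tuples by their image under \<open>\<beta>\<close>: on the fibre of a theme tuple \<open>ks\<close> the products
  of \<open>p\<close> sum to the product of the projected distribution over \<open>ks\<close>.\<close>

lemma has_sum_Sigma_nonneg:
  fixes f :: "'a \<times> 'b \<Rightarrow> real"
  assumes "\<And>x y. x \<in> A \<Longrightarrow> y \<in> B x \<Longrightarrow> 0 \<le> f (x, y)"
    and "\<And>x. x \<in> A \<Longrightarrow> ((\<lambda>y. f (x, y)) has_sum g x) (B x)"
    and "(g has_sum S) A"
  shows "(f has_sum S) (Sigma A B)"
  using assms by (intro has_sum_SigmaI summable_on_SigmaI) (auto dest: has_sum_imp_summable)

lemma has_sum_swap_nonneg:
  fixes f :: "'a \<Rightarrow> 'b \<Rightarrow> real"
  assumes "\<And>x y. x \<in> A \<Longrightarrow> y \<in> B \<Longrightarrow> 0 \<le> f x y"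
    and "\<And>x. x \<in> A \<Longrightarrow> (f x has_sum g x) B"
    and "(g has_sum S) A"
  shows "((\<lambda>y. \<Sum>\<^sub>\<infinity>x\<in>A. f x y) has_sum S) B"
proof -
  have "((\<lambda>(x, y). f x y) has_sum S) (A \<times> B)"
    using assms by (intro has_sum_Sigma_nonneg) auto
  then have swapped: "((\<lambda>(y, x). f x y) has_sum S) (B \<times> A)"
    by (subst (asm) has_sum_swap) simp
  show ?thesis
  proof (rule has_sum_SigmaD[OF swapped], goal_cases)
    case (1 y)
    then have "(\<lambda>x. f x y) summable_on A"
      using summable_on_SigmaD1[of "\<lambda>y x. f x y"] swapped by (blast dest: has_sum_imp_summable)
    then show ?case by simp
  qed
qed

lemma has_sum_Times_mult_nonneg:
  fixes f :: "'a \<Rightarrow> real" and g :: "'b \<Rightarrow> real"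
  assumes "(f has_sum a) A" "(g has_sum b) B"
    and "\<And>x. x \<in> A \<Longrightarrow> 0 \<le> f x" "\<And>y. y \<in> B \<Longrightarrow> 0 \<le> g y"
  shows "((\<lambda>(x, y). f x * g y) has_sum a * b) (A \<times> B)"
  using assms by (intro has_sum_Sigma_nonneg[where g = "\<lambda>x. f x * b"])
    (auto intro: has_sum_cmult_left has_sum_cmult_right)

lemma has_sum_prod_list_fibre:
  fixes p :: "'a \<Rightarrow> real" and \<beta> :: "'a \<Rightarrow> 'b"
  assumes nonneg: "\<And>x. 0 \<le> p x" and summable: "p summable_on UNIV"
  shows "((\<lambda>xs. prod_list (map p xs)) has_sum prod_list (map (projection \<beta> p) ks))
           {xs. map \<beta> xs = ks}"
proof (induction ks)
  case Nil
  have "{xs. map \<beta> xs = []} = {[]}" by auto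
  then show ?case using has_sum_finite[of "{[]}" "\<lambda>xs. prod_list (map p xs)"] by simp
next
  case (Cons k ks)
  have "(p has_sum projection \<beta> p k) {x. \<beta> x = k}"
    unfolding projection_def using summable_on_subset[OF summable] by simp
  then have "((\<lambda>(x, xs). p x * prod_list (map p xs)) has_sum
      projection \<beta> p k * prod_list (map (projection \<beta> p) ks)) ({x. \<beta> x = k} \<times> {xs. map \<beta> xs = ks})"
    using Cons nonneg by (intro has_sum_Times_mult_nonneg) (auto intro!: prod_list_nonneg)
  also have "?this \<longleftrightarrow> ((\<lambda>xs. prod_list (map p xs)) has_sum
      projection \<beta> p k * prod_list (map (projection \<beta> p) ks)) {xs. map \<beta> xs = k # ks}"
    by (rule has_sum_reindex_bij_witness[where i = "\<lambda>xs. (hd xs, tl xs)" and j = "\<lambda>(x, xs). x # xs"])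
      auto
  finally show ?case by simp
qed

lemma has_sum_prod_list_length:
  fixes p :: "'a \<Rightarrow> real"
  assumes "\<And>x. 0 \<le> p x" and "(p has_sum s) UNIV"
  shows "((\<lambda>xs. prod_list (map p xs)) has_sum s ^ m) {xs. length xs = m}"
proof -
  have fibre_eq: "{xs. map (\<lambda>_. ()) xs = replicate m ()} = {xs. length xs = m}"
    by (auto simp: map_replicate_const)
  have "((\<lambda>xs. prod_list (map p xs)) has_sum prod_list (map (projection (\<lambda>_. ()) p) (replicate m ())))
      {xs. length xs = m}"
    using has_sum_prod_list_fibre[of p "\<lambda>_. ()" "replicate m ()"] assms unfolding fibre_eq
    by (auto dest: has_sum_imp_summable)
  moreover have "projection (\<lambda>_. ()) p () = s"
    using assms(2) by (simp add: projection_def infsumI)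
  ultimately show ?thesis by simp
qed

lemma summable_on_weighted_prod_list:
  fixes p :: "'a \<Rightarrow> real"
  assumes "\<And>x. 0 \<le> p x" and "p summable_on UNIV"
    and "\<And>xs. length xs = m \<Longrightarrow> 0 \<le> w xs" and "\<And>xs. length xs = m \<Longrightarrow> w xs \<le> 1"
  shows "(\<lambda>xs. w xs * prod_list (map p xs)) summable_on {xs. length xs = m}"
proof (rule summable_on_comparison_test)
  show "(\<lambda>xs. prod_list (map p xs)) summable_on {xs. length xs = m}"
    using has_sum_prod_list_length[OF assms(1) has_sum_infsum[OF assms(2)]]
    by (rule has_sum_imp_summable)
  fix xs :: "'a list" assume "xs \<in> {xs. length xs = m}"
  moreover have "0 \<le> prod_list (map p xs)"
    using assms(1) by (auto intro!: prod_list_nonneg)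
  ultimately show "w xs * prod_list (map p xs) \<le> prod_list (map p xs)"
    and "0 \<le> w xs * prod_list (map p xs)"
    using assms(3,4) by (auto intro: mult_left_le_one_le)
qed

lemma transmission_fun_nonneg: "transmission_fun m T \<Longrightarrow> length xs = m \<Longrightarrow> 0 \<le> T x xs"
  by (simp add: transmission_fun_def distribution_def)

lemma transmission_fun_le_one: "transmission_fun m T \<Longrightarrow> length xs = m \<Longrightarrow> T x xs \<le> 1"
  by (simp add: transmission_fun_def distribution_def)

lemma ambivalence_witness_theme_tf:
  assumes "ambivalent m T \<beta>"
  shows "ambivalence_witness m T \<beta> (theme_tf m T \<beta>)"
  using assms unfolding ambivalent_def theme_tf_def by (rule someI_ex)

lemma ambivalence_witness_has_sum:
  assumes "ambivalence_witness m T \<beta> D" and "transmission_fun m T" and "length xs = m"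
  shows "((\<lambda>x. T x xs) has_sum D k (map \<beta> xs)) {x. \<beta> x = k}"
proof -
  have "(\<lambda>x. T x xs) summable_on UNIV"
    using assms(2,3) by (auto simp: transmission_fun_def distribution_def dest: has_sum_imp_summable)
  then have "((\<lambda>x. T x xs) has_sum (\<Sum>\<^sub>\<infinity>x\<in>{x. \<beta> x = k}. T x xs)) {x. \<beta> x = k}"
    by (auto intro: has_sum_infsum summable_on_subset)
  with assms(1,3) show ?thesis by (simp add: ambivalence_witness_def)
qed

lemma projection_variation_eq:
  fixes T :: "'a \<Rightarrow> 'a list \<Rightarrow> real" and \<beta> :: "'a \<Rightarrow> 'b"
  assumes "\<And>x xs. length xs = m \<Longrightarrow> 0 \<le> T x xs" and "\<And>x. 0 \<le> p x"
    and "\<And>xs. length xs = m \<Longrightarrow> ((\<lambda>x. T x xs) has_sum a xs) {x. \<beta> x = k}"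
    and "((\<lambda>xs. a xs * prod_list (map p xs)) has_sum S) {xs. length xs = m}"
  shows "projection \<beta> (variation m T p) k = S"
proof -
  have "((\<lambda>x. variation m T p x) has_sum S) {x. \<beta> x = k}"
    unfolding variation_def using assms
    by (intro has_sum_swap_nonneg) (auto intro: has_sum_cmult_left intro!: mult_nonneg_nonneg prod_list_nonneg)
  then show ?thesis by (simp add: projection_def infsumI)
qed

lemma variation_projection_eq:
  fixes D :: "'b \<Rightarrow> 'b list \<Rightarrow> real" and \<beta> :: "'a \<Rightarrow> 'b"
  assumes nonneg: "\<And>x. 0 \<le> p x" and summable: "p summable_on UNIV"
    and sum: "((\<lambda>xs. D k (map \<beta> xs) * prod_list (map p xs)) has_sum S) {xs. length xs = m}"
  shows "variation m D (projection \<beta> p) k = S"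
proof -
  have "((\<lambda>(ks, xs). D k ks * prod_list (map p xs)) has_sum S)
      (SIGMA ks:{ks. length ks = m}. {xs. map \<beta> xs = ks})"
    using sum by (subst has_sum_reindex_bij_witness[where i = "\<lambda>xs. (map \<beta> xs, xs)" and j = snd])
      auto
  then have "((\<lambda>ks. D k ks * prod_list (map (projection \<beta> p) ks)) has_sum S) {ks. length ks = m}"
    by (rule has_sum_SigmaD)
      (auto intro: has_sum_cmult_right has_sum_prod_list_fibre[OF nonneg summable])
  then show ?thesis by (simp add: variation_def infsumI)
qed

theorem theorem1:
  fixes T :: "'g::countable \<Rightarrow> 'g list \<Rightarrow> real"
    and \<beta> :: "'g \<Rightarrow> 'k::countable"
    and m :: nat
    and p :: "'g \<Rightarrow> real"
  assumes "m \<ge> 1"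
    and "transmission_fun m T"
    and "surj \<beta>"
    and "ambivalent m T \<beta>"
    and "distribution p"
  shows "projection \<beta> (variation m T p) = variation m (theme_tf m T \<beta>) (projection \<beta> p)"
proof
  fix k
  let ?D = "theme_tf m T \<beta>"
  have D: "ambivalence_witness m T \<beta> ?D"
    using assms(4) by (rule ambivalence_witness_theme_tf)
  then have D_tf: "transmission_fun m ?D"
    by (simp add: ambivalence_witness_def)
  have p_nonneg: "\<And>x. 0 \<le> p x" and p_summable: "p summable_on UNIV"
    using assms(5) by (auto simp: distribution_def dest: has_sum_imp_summable)
  have "(\<lambda>xs. ?D k (map \<beta> xs) * prod_list (map p xs)) summable_on {xs. length xs = m}"
    using p_nonneg p_summable
    by (rule summable_on_weighted_prod_list)
      (simp_all add: transmission_fun_nonneg[OF D_tf] transmission_fun_le_one[OF D_tf])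
  then obtain S
    where S: "((\<lambda>xs. ?D k (map \<beta> xs) * prod_list (map p xs)) has_sum S) {xs. length xs = m}"
    by (auto simp: summable_on_def)
  have "projection \<beta> (variation m T p) k = S"
  proof (rule projection_variation_eq[OF _ p_nonneg _ S])
    show "0 \<le> T x xs" if "length xs = m" for x xs
      using assms(2) that by (rule transmission_fun_nonneg)
    show "((\<lambda>x. T x xs) has_sum ?D k (map \<beta> xs)) {x. \<beta> x = k}" if "length xs = m" for xs
      using D assms(2) that by (rule ambivalence_witness_has_sum)
  qed
  moreover have "variation m ?D (projection \<beta> p) k = S"
    using p_nonneg p_summable S by (rule variation_projection_eq)
  ultimately show "projection \<beta> (variation m T p) k = variation m ?D (projection \<beta> p) k"
    by simp
qed

end
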